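(* Assume the setting described in the context, with $\delta:=\frac{1}{2C(\alpha,\lambda)}$. Take $r>0$ such that $q:=C(\alpha,\lambda)\,\ell_h(r)<1$ and set $$r^*=\frac{r(1-q)}{\max_{1\le i\le n}\sup_{t\ge t_0}\big|E_\alpha\big(\lambda_i\big(\frac{t^\rho-t_0^\rho}{\rho}\big)^{\alpha}\big)\big|}.$$ Let $B_{C_\infty}(0,r)=\{\xi\in C_\infty([t_0,\infty),\mathbb{C}^d):\|\xi\|_\infty\le r\}$. Then for every $x\in\mathbb{C}^d$ with $\|x\|\le r^*$ we have $\mathcal{F}_x(B_{C_\infty}(0,r))\subset B_{C_\infty}(0,r)$ and $$\|\mathcal{F}_x\xi-\mathcal{F}_x\widehat\xi\|_\infty\le q\|\xi-\widehat\xi\|_\infty\quad\text{for all }\xi,\widehat\xi\in B_{C_\infty}(0,r).$$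
   Context: Fix $0<\alpha<1$, $\rho>0$, $t_0>0$. Mittag-Leffler functions: $E_{\alpha,\beta}(z)=\sum_{k\ge0}\frac{z^k}{\Gamma(k\alpha+\beta)}$, $E_\alpha=E_{\alpha,1}$. Let $A\in\mathbb{R}^{d\times d}$ with $\sigma(A)\subset\{\lambda\in\mathbb{C}:|\arg\lambda|>\frac{\alpha\pi}{2}\}$, and let $f:\mathbb{R}^d\to\mathbb{R}^d$ be locally Lipschitz with $f(0)=0$ and $\lim_{r\to0}\ell_f(r)=0$, where $\ell_f(r)=\sup_{x,y\in B(0,r),x\ne y}\|f(x)-f(y)\|/\|x-y\|$. Let $T\in\mathbb{C}^{d\times d}$ be nonsingular with $T^{-1}AT=\mathrm{diag}(A_1,\dots,A_n)$ (Jordan form), $A_i=\lambda_iI_{d_i}+\eta_iN_{d_i}$, $\eta_i\in\{0,1\}$, $N_{d_i}$ the $d_i\times d_i$ matrix with ones on the superdiagonal and zeros elsewhere, $\lambda=(\lambda_1,\dots,\lambda_n)$. There is a constant $C(\alpha,\lambda)>0$ depending only on $\alpha,\lambda$ with $\sup_{t\ge a}\int_a^t\big|\big(\frac{t^\rho-s^\rho}{\rho}\big)^{\alpha-1}E_{\alpha,\alpha}\big(\lambda_i\big(\frac{t^\rho-s^\rho}{\rho}\big)^{\alpha}\big)s^{\rho-1}\big|ds\le C(\alpha,\lambda)$ for all $i$ and $a>0$ (it is the constant of the Lipschitz estimate $\|\mathcal{F}_x\xi-\mathcal{F}_x\widehat\xi\|_\infty\le C(\alpha,\lambda)\ell_h(\max(\|\xi\|_\infty,\|\widehat\xi\|_\infty))\|\xi-\widehat\xi\|_\infty$).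 For $\delta>0$ let $P=\mathrm{diag}(P_1,\dots,P_n)$, $P_i=\mathrm{diag}(1,\delta,\dots,\delta^{d_i-1})$, so $P_i^{-1}A_iP_i=\lambda_iI_{d_i}+\delta_iN_{d_i}$, $\delta_i\in\{0,\delta\}$. Put $J_i=\lambda_iI_{d_i}$, $h(y)=\mathrm{diag}(\delta_1N_{d_1},\dots,\delta_nN_{d_n})y+(TP)^{-1}f(TPy)$, and $\ell_h(r)=\sup_{y,z\in B(0,r),y\ne z}\|h(y)-h(z)\|/\|y-z\|$. $C_\infty([t_0,\infty),\mathbb{C}^d)$ is the space of bounded continuous functions with $\|\xi\|_\infty=\sup_{t\ge t_0}\|\xi(t)\|$. With $x=(x^1,\dots,x^n)\in\mathbb{C}^{d_1}\times\dots\times\mathbb{C}^{d_n}$ and $h=(h^1,\dots,h^n)$, define $\mathcal{F}_x$ by $$(\mathcal{F}_x\xi)^i(t)=E_\alpha\Big(\Big(\tfrac{t^\rho-t_0^\rho}{\rho}\Big)^{\alpha}J_i\Big)x^i+\int_{t_0}^t\Big(\tfrac{t^\rho-s^\rho}{\rho}\Big)^{\alpha-1}E_{\alpha,\alpha}\Big(\Big(\tfrac{t^\rho-s^\rho}{\rho}\Big)^{\alpha}J_i\Big)s^{\rho-1}h^i(\xi(s))\,ds.$$ *)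

theory Defs
  imports "HOL-Analysis.Analysis"
begin

definition mittag_leffler :: "real \<Rightarrow> real \<Rightarrow> complex \<Rightarrow> complex" where
  "mittag_leffler \<alpha> \<beta> z = (\<Sum>k. z ^ k / complex_of_real (Gamma (real k * \<alpha> + \<beta>)))"

definition cnorm :: "complex ^ 'd \<Rightarrow> real" where
  "cnorm x = Max (range (\<lambda>k. cmod (x $ k)))"

definition rnorm :: "real ^ 'd \<Rightarrow> real" where
  "rnorm x = Max (range (\<lambda>k. \<bar>x $ k\<bar>))"

definition lip_quot :: "('a::ab_group_add \<Rightarrow> real) \<Rightarrow> ('a \<Rightarrow> 'a) \<Rightarrow> real \<Rightarrow> real set" where
  "lip_quot nrm g r =
     {nrm (g x - g y) / nrm (x - y) | x y. nrm x \<le> r \<and> nrm y \<le> r \<and> x \<noteq> y}"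

definition lip_const :: "('a::ab_group_add \<Rightarrow> real) \<Rightarrow> ('a \<Rightarrow> 'a) \<Rightarrow> real \<Rightarrow> real" where
  "lip_const nrm g r = Sup (lip_quot nrm g r)"

definition kern :: "real \<Rightarrow> real \<Rightarrow> complex \<Rightarrow> real \<Rightarrow> real \<Rightarrow> complex" where
  "kern \<alpha> \<rho> lam t s =
     (let u = (t powr \<rho> - s powr \<rho>) / \<rho> in
      complex_of_real (u powr (\<alpha> - 1)) * mittag_leffler \<alpha> \<alpha> (lam * complex_of_real (u powr \<alpha>))
        * complex_of_real (s powr (\<rho> - 1)))"

definition Cinf :: "real \<Rightarrow> (real \<Rightarrow> complex ^ 'd) set" where
  "Cinf t0 = {\<xi>. continuous_on {t0..} \<xi> \<and> bdd_above ((\<lambda>t. cnorm (\<xi> t)) ` {t0..})}"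

definition sup_norm :: "real \<Rightarrow> (real \<Rightarrow> complex ^ 'd) \<Rightarrow> real" where
  "sup_norm t0 \<xi> = (SUP t\<in>{t0..}. cnorm (\<xi> t))"

definition Cball :: "real \<Rightarrow> real \<Rightarrow> (real \<Rightarrow> complex ^ 'd) set" where
  "Cball t0 r = {\<xi> \<in> Cinf t0. sup_norm t0 \<xi> \<le> r}"

text \<open>Block data: coordinate k lies in block blk k at position pos k.
  Jordan matrix diag(A_1,...,A_n), A_i = lam_i I + eta_i N.\<close>
definition jordan_mat :: "('d \<Rightarrow> nat) \<Rightarrow> ('d \<Rightarrow> nat) \<Rightarrow> (nat \<Rightarrow> complex) \<Rightarrow> (nat \<Rightarrow> bool)
    \<Rightarrow> complex ^ 'd ^ 'd" where
  "jordan_mat blk pos lam eta = (\<chi> p q.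
     if blk p = blk q then
       (if pos p = pos q then lam (blk p)
        else if pos q = pos p + 1 \<and> eta (blk p) then 1 else 0)
     else 0)"

definition nil_mat :: "('d \<Rightarrow> nat) \<Rightarrow> ('d \<Rightarrow> nat) \<Rightarrow> (nat \<Rightarrow> bool) \<Rightarrow> real
    \<Rightarrow> complex ^ 'd ^ 'd" where
  "nil_mat blk pos eta \<delta> = (\<chi> p q.
     if blk p = blk q \<and> pos q = pos p + 1 \<and> eta (blk p) then complex_of_real \<delta> else 0)"

definition scale_mat :: "('d \<Rightarrow> nat) \<Rightarrow> real \<Rightarrow> complex ^ 'd ^ 'd" where
  "scale_mat pos \<delta> = (\<chi> p q. if p = q then complex_of_real (\<delta> ^ pos p) else 0)"

definition cmat_of :: "real ^ 'd ^ 'd \<Rightarrow> complex ^ 'd ^ 'd" where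
  "cmat_of A = (\<chi> i j. complex_of_real (A $ i $ j))"

definition cvec_of :: "real ^ 'd \<Rightarrow> complex ^ 'd" where
  "cvec_of x = (\<chi> i. complex_of_real (x $ i))"

definition re_vec :: "complex ^ 'd \<Rightarrow> real ^ 'd" where
  "re_vec y = (\<chi> i. Re (y $ i))"

text \<open>h(y) = diag(delta_i N_{d_i}) y + (TP)^{-1} f(TPy); f (defined on R^d) is applied
  to the real part of TPy.\<close>
definition hfun :: "('d \<Rightarrow> nat) \<Rightarrow> ('d \<Rightarrow> nat) \<Rightarrow> (nat \<Rightarrow> bool) \<Rightarrow> real
    \<Rightarrow> complex ^ 'd ^ 'd \<Rightarrow> (real ^ 'd \<Rightarrow> real ^ 'd) \<Rightarrow> complex ^ 'd \<Rightarrow> complex ^ 'd" where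
  "hfun blk pos eta \<delta> T f y =
     nil_mat blk pos eta \<delta> *v y
     + matrix_inv (T ** scale_mat pos \<delta>)
         *v cvec_of (f (re_vec ((T ** scale_mat pos \<delta>) *v y)))"

definition Fop :: "real \<Rightarrow> real \<Rightarrow> real \<Rightarrow> ('d \<Rightarrow> nat) \<Rightarrow> (nat \<Rightarrow> complex)
    \<Rightarrow> (complex ^ 'd \<Rightarrow> complex ^ 'd) \<Rightarrow> complex ^ 'd \<Rightarrow> (real \<Rightarrow> complex ^ 'd) \<Rightarrow> real \<Rightarrow> complex ^ 'd" where
  "Fop \<alpha> \<rho> t0 blk lam h x \<xi> t = (\<chi> k.
     mittag_leffler \<alpha> 1 (lam (blk k) * complex_of_real (((t powr \<rho> - t0 powr \<rho>) / \<rho>) powr \<alpha>)) * x $ k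
     + integral {t0..t} (\<lambda>s. kern \<alpha> \<rho> (lam (blk k)) t s * h (\<xi> s) $ k))"

end

theory Submission
  imports Defs
begin

text \<open>Since \<open>h 0 = 0\<close> and \<open>h\<close> is \<open>\<ell>\<^sub>h(r)\<close>-Lipschitz on the ball, the integral is at most
  \<open>C \<ell>\<^sub>h(r) r\<close>, and the choice of \<open>r\<^sup>*\<close> keeps the sum below \<open>r\<close>; the same kernel bound applied to
  \<open>h(\<xi>) - h(\<xi>')\<close> gives the contraction. The analytic content is that \<open>F\<^sub>x \<xi>\<close> is again
  continuous and bounded: \<open>E\<^sub>\<alpha>(\<lambda> ((t\<^sup>\<rho> - t\<^sub>0\<^sup>\<rho>)/\<rho>)\<^sup>\<alpha>)\<close> is bounded by \<open>1 + |\<lambda>| C\<close> because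
  its \<open>s\<close>-derivative is \<open>-\<lambda>\<close> times the kernel, and the weakly singular integral is continuous
  in \<open>t\<close>.\<close>

definition ml_coeff :: "real \<Rightarrow> real \<Rightarrow> nat \<Rightarrow> complex" where
  "ml_coeff a b k = inverse (complex_of_real (Gamma (real k * a + b)))"

lemma mittag_leffler_powser: "mittag_leffler a b = (\<lambda>z. \<Sum>k. ml_coeff a b k * z ^ k)"
  unfolding mittag_leffler_def ml_coeff_def by (simp add: divide_inverse mult.commute)

lemma power_div_fact_le_exp:
  fixes x :: real assumes "0 \<le> x"
  shows "x ^ m / fact m \<le> exp x"
proof -
  have "summable (\<lambda>n. x ^ n / fact n)"
    using summable_exp[of x] by (simp add: divide_inverse mult.commute)
  hence "(\<Sum>n\<in>{m}. x ^ n / fact n) \<le> (\<Sum>n. x ^ n / fact n)"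
    by (rule sum_le_suminf) (use assms in auto)
  thus ?thesis by (simp add: exp_def inverse_eq_divide field_simps)
qed

lemma fact_le_Gamma:
  fixes x :: real assumes "x \<ge> 2"
  shows "fact (nat \<lfloor>x\<rfloor> - 1) \<le> Gamma x"
proof -
  define m where "m = nat \<lfloor>x\<rfloor> - 1"
  have fl2: "\<lfloor>x\<rfloor> \<ge> 2" using assms by linarith
  hence "nat \<lfloor>x\<rfloor> \<ge> 1" using nat_mono[OF fl2] by simp
  hence "real m = real (nat \<lfloor>x\<rfloor>) - 1" unfolding m_def by (simp add: of_nat_diff)
  moreover have "real (nat \<lfloor>x\<rfloor>) = of_int \<lfloor>x\<rfloor>" by (rule of_nat_nat) (use fl2 in linarith)
  ultimately have fl: "real m + 1 = of_int \<lfloor>x\<rfloor>" by simp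
  hence "real m + 1 \<le> x" "real m + 1 \<ge> 3/2" using fl2 by linarith+
  hence "Gamma (real m + 1) \<le> Gamma x"
    using Gamma_real_strict_mono[of "real m + 1" x] by (cases "real m + 1 = x") auto
  moreover have "Gamma (real m + 1) = fact m"
    using Gamma_fact[of m, where 'a=real] by (simp add: add.commute)
  ultimately show ?thesis unfolding m_def by simp
qed

text \<open>With \<open>m = \<lfloor>k a + b\<rfloor> - 1 \<ge> k a - 2\<close> and \<open>E = c\<^sup>1\<^sup>/\<^sup>a\<close>, the term is at most
  \<open>E\<^sup>2 E\<^sup>m / m! = E\<^sup>2 (2E)\<^sup>m/m! \<cdot> 2\<^sup>-\<^sup>m \<le> E\<^sup>2 e\<^sup>2\<^sup>E 2\<^sup>-\<^sup>m\<close>, and \<open>2\<^sup>-\<^sup>m \<le> 4 (2\<^sup>-\<^sup>a)\<^sup>k\<close>.\<close>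
lemma norm_ml_term_le_geometric:
  assumes a: "0 < a" and b: "0 < b" and k: "2 \<le> real k * a" and c: "1 \<le> c" "cmod z \<le> c"
  shows "norm (ml_coeff a b k * z ^ k)
           \<le> 4 * (c powr (1/a))\<^sup>2 * exp (2 * c powr (1/a)) * ((1/2) powr a) ^ k"
proof -
  define E where "E = c powr (1/a)"
  define x where "x = real k * a + b"
  define m where "m = nat \<lfloor>x\<rfloor> - 1"
  have E1: "E \<ge> 1" unfolding E_def using c a by (simp add: ge_one_powr_ge_zero)
  have x2: "x \<ge> 2" unfolding x_def using b k by linarith
  have mx: "real m \<ge> real k * a - 2"
    using x2 b unfolding m_def x_def by (simp add: of_nat_diff) linarith
  have "cmod z ^ k \<le> c ^ k" using c by (intro power_mono) auto
  also have "c ^ k = E powr (real k * a)"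
    unfolding E_def using c a by (simp add: powr_powr powr_realpow)
  also have "\<dots> \<le> E powr (real m + 2)"
    using E1 mx by (intro powr_mono) auto
  also have "\<dots> = E\<^sup>2 * E ^ m"
    using E1 by (simp add: powr_add powr_realpow power_add mult.commute)
  finally have zk: "cmod z ^ k \<le> E\<^sup>2 * E ^ m" .
  have "E ^ m / fact m = (2 * E) ^ m / fact m * (1/2) ^ m"
    by (simp add: power_mult_distrib field_simps)
  also have "\<dots> \<le> exp (2 * E) * (1/2) ^ m"
    using E1 by (intro mult_right_mono power_div_fact_le_exp) auto
  finally have Em: "E ^ m / fact m \<le> exp (2 * E) * (1/2) ^ m" .
  have "(1/2::real) ^ m = (1/2) powr (real m)" by (simp add: powr_realpow)
  also have "\<dots> \<le> (1/2) powr (real k * a - 2)"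
    using mx by (intro powr_mono') auto
  also have "\<dots> = (1/2) powr (real k * a) / (1/2) powr 2" by (simp add: powr_diff)
  also have "(1/2::real) powr (real k * a) = ((1/2) powr a) ^ k"
    by (simp add: powr_powr mult.commute flip: powr_realpow)
  also have "(1/2::real) powr 2 = 1/4" by (simp add: powr_numeral power2_eq_square)
  also have "((1/2) powr a) ^ k / (1/4) = 4 * ((1/2::real) powr a) ^ k" by simp
  finally have hm: "(1/2::real) ^ m \<le> 4 * ((1/2) powr a) ^ k" .
  have "norm (ml_coeff a b k * z ^ k) = cmod z ^ k / Gamma x"
    unfolding ml_coeff_def x_def using x2 x_def
    by (simp add: norm_mult norm_power norm_inverse divide_inverse mult.commute)
  also have "\<dots> \<le> cmod z ^ k / fact m"
    using fact_le_Gamma[OF x2] x2 by (intro divide_left_mono) (auto simp: m_def)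
  also have "\<dots> \<le> E\<^sup>2 * (E ^ m / fact m)"
    using zk by (simp add: divide_right_mono)
  also have "\<dots> \<le> E\<^sup>2 * (exp (2 * E) * (4 * ((1/2) powr a) ^ k))"
    using Em hm by (intro mult_left_mono order.trans[OF Em] mult_left_mono) auto
  finally show ?thesis unfolding E_def by (simp add: mult_ac)
qed

lemma summable_mittag_leffler:
  assumes a: "0 < a" and b: "0 < b"
  shows "summable (\<lambda>k. ml_coeff a b k * z ^ k)"
proof -
  define c where "c = max 1 (cmod z)"
  define q where "q = (1/2::real) powr a"
  have q: "0 < q" "q < 1" unfolding q_def using a by (auto simp: powr01_less_one)
  obtain N :: nat where N: "real N \<ge> 2 / a" using real_arch_simple by blast
  show ?thesis
  proof (rule summable_comparison_test'[OF summable_mult[OF summable_geometric[of q]]])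
    fix k assume "N \<le> k"
    hence "2 \<le> real k * a" using N a
      by (metis divide_le_eq mult.commute of_nat_le_iff order.trans)
    thus "norm (ml_coeff a b k * z ^ k) \<le> 4 * (c powr (1/a))\<^sup>2 * exp (2 * c powr (1/a)) * q ^ k"
      unfolding q_def c_def by (intro norm_ml_term_le_geometric a b) auto
  qed (use q in auto)
qed

lemma isCont_mittag_leffler: "0 < a \<Longrightarrow> 0 < b \<Longrightarrow> isCont (mittag_leffler a b) z"
  unfolding mittag_leffler_powser
  by (rule isCont_powser_converges_everywhere, rule summable_mittag_leffler)

lemma tendsto_mittag_leffler[tendsto_intros]:
  "0 < a \<Longrightarrow> 0 < b \<Longrightarrow> (f \<longlongrightarrow> l) F \<Longrightarrow>
     ((\<lambda>x. mittag_leffler a b (f x)) \<longlongrightarrow> mittag_leffler a b l) F"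
  by (rule isCont_tendsto_compose[OF isCont_mittag_leffler])

lemma continuous_on_mittag_leffler[continuous_intros]:
  "0 < a \<Longrightarrow> 0 < b \<Longrightarrow> continuous_on S f \<Longrightarrow> continuous_on S (\<lambda>x. mittag_leffler a b (f x))"
  unfolding continuous_on_def by (auto intro: tendsto_mittag_leffler)

lemma mittag_leffler_zero: "mittag_leffler a 1 0 = 1"
  unfolding mittag_leffler_powser ml_coeff_def by (simp add: powser_zero)

lemma mittag_leffler_bounded_on_cball:
  assumes "0 < a" "0 < b"
  obtains M where "0 \<le> M" "\<And>w. norm w \<le> R \<Longrightarrow> cmod (mittag_leffler a b w) \<le> M"
proof -
  have "compact (mittag_leffler a b ` cball 0 R)"
    by (intro compact_continuous_image continuous_at_imp_continuous_on ballI
        isCont_mittag_leffler assms compact_cball)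
  then obtain m where "\<forall>y\<in>mittag_leffler a b ` cball 0 R. norm y \<le> m"
    using compact_imp_bounded bounded_iff by metis
  thus ?thesis by (intro that[of "max 0 m"]) (auto simp: le_max_iff_disj)
qed

text \<open>\<open>\<Gamma>((k+1)a + 1) = (k+1) a \<Gamma>((k+1)a)\<close> turns the differentiated series of \<open>E\<^sub>a\<close>
  into that of \<open>E\<^sub>a\<^sub>,\<^sub>a / a\<close>.\<close>
lemma diffs_ml_coeff:
  assumes a: "0 < a"
  shows "diffs (ml_coeff a 1) k = ml_coeff a a k / of_real a"
proof -
  define y where "y = real k * a + a"
  have y: "y > 0" unfolding y_def using a by (simp add: add_nonneg_pos)
  have "Gamma (y + 1) = y * Gamma y"
    by (rule Gamma_plus1) (use y in \<open>auto elim!: nonpos_Ints_cases\<close>)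
  moreover have "real (Suc k) * a + 1 = y + 1" "y = real (Suc k) * a"
    unfolding y_def by (simp_all add: algebra_simps)
  moreover have "Gamma y > 0" using y by simp
  ultimately have "real (Suc k) / Gamma (real (Suc k) * a + 1) = real (Suc k) / (real (Suc k) * a * Gamma y)"
    by simp
  also have "\<dots> = inverse (Gamma y) / a"
  proof -
    have "real (Suc k) * a * Gamma y > 0" using \<open>Gamma y > 0\<close> a by simp
    thus ?thesis using \<open>Gamma y > 0\<close> a by (simp add: field_simps)
  qed
  finally have eq: "real (Suc k) / Gamma (real (Suc k) * a + 1) = inverse (Gamma y) / a" .
  have "diffs (ml_coeff a 1) k = of_real (real (Suc k) / Gamma (real (Suc k) * a + 1))"
    unfolding diffs_def ml_coeff_def by (simp add: divide_inverse of_real_inverse)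
  moreover have "ml_coeff a a k / of_real a = of_real (inverse (Gamma y) / a)"
    unfolding ml_coeff_def y_def by (simp add: of_real_inverse)
  ultimately show ?thesis by (simp only: eq)
qed

lemma mittag_leffler_has_field_derivative:
  assumes a: "0 < a"
  shows "(mittag_leffler a 1 has_field_derivative mittag_leffler a a z / of_real a) (at z)"
proof -
  have "((\<lambda>z. \<Sum>k. ml_coeff a 1 k * z ^ k) has_field_derivative
          (\<Sum>k. diffs (ml_coeff a 1) k * z ^ k)) (at z)"
    by (rule termdiffs_strong_converges_everywhere, rule summable_mittag_leffler) (use a in auto)
  moreover have "(\<Sum>k. diffs (ml_coeff a 1) k * z ^ k) = (\<Sum>k. ml_coeff a a k * z ^ k) / of_real a"
    unfolding diffs_ml_coeff[OF a]
    using suminf_divide[OF summable_mittag_leffler[OF a a, of z], of "of_real a"] by simp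
  ultimately show ?thesis unfolding mittag_leffler_powser by simp
qed
lemma kern_arg_has_real_derivative:
  assumes "0 < \<rho>" "0 < s"
  shows "((\<lambda>s. (t powr \<rho> - s powr \<rho>) / \<rho>) has_real_derivative - (s powr (\<rho> - 1))) (at s)"
proof -
  have "((\<lambda>s. (t powr \<rho> - s powr \<rho>) / \<rho>) has_real_derivative (0 - \<rho> * s powr (\<rho> - 1)) / \<rho>) (at s)"
    using assms by (intro DERIV_cdivide DERIV_diff DERIV_const has_real_derivative_powr) auto
  thus ?thesis using assms by simp
qed

lemma kern_arg_pos:
  fixes \<rho> s t :: real
  assumes "0 < \<rho>" "0 < s" "s < t"
  shows "(t powr \<rho> - s powr \<rho>) / \<rho> > 0"
  using assms powr_less_mono2[of \<rho> s t] by simp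

lemma kern_arg_nonneg:
  fixes \<rho> s t :: real
  assumes "0 < \<rho>" "0 < s" "s \<le> t"
  shows "(t powr \<rho> - s powr \<rho>) / \<rho> \<ge> 0"
  using assms powr_mono2[of \<rho> s t] by simp

lemma kern_arg_powr_has_real_derivative:
  assumes "0 < \<rho>" "0 < s" "s < t"
  shows "((\<lambda>s. ((t powr \<rho> - s powr \<rho>) / \<rho>) powr \<alpha>) has_real_derivative
           \<alpha> * ((t powr \<rho> - s powr \<rho>) / \<rho>) powr (\<alpha> - 1) * - (s powr (\<rho> - 1))) (at s)"
  using DERIV_fun_powr[OF kern_arg_has_real_derivative[OF assms(1,2)] kern_arg_pos[OF assms], of \<alpha>]
  by simp

lemma mittag_leffler_kern_arg_has_vector_derivative:
  assumes a: "0 < \<alpha>" and r: "0 < \<rho>" and s: "0 < s" "s < t"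
  shows "((\<lambda>s. mittag_leffler \<alpha> 1 (lam * complex_of_real (((t powr \<rho> - s powr \<rho>) / \<rho>) powr \<alpha>)))
           has_vector_derivative (- (lam * kern \<alpha> \<rho> lam t s))) (at s within X)"
proof -
  define u where "u = (t powr \<rho> - s powr \<rho>) / \<rho>"
  define V' where "V' = \<alpha> * u powr (\<alpha> - 1) * - (s powr (\<rho> - 1))"
  have inner: "((\<lambda>s. lam * complex_of_real (((t powr \<rho> - s powr \<rho>) / \<rho>) powr \<alpha>))
      has_vector_derivative lam * complex_of_real V') (at s within X)"
    unfolding V'_def u_def
    by (rule has_vector_derivative_mult_right, rule has_vector_derivative_of_real,
        rule has_field_derivative_at_within, rule kern_arg_powr_has_real_derivative[OF r s])
  have outer: "(mittag_leffler \<alpha> 1 has_field_derivative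
      mittag_leffler \<alpha> \<alpha> (lam * complex_of_real (u powr \<alpha>)) / of_real \<alpha>)
      (at (lam * complex_of_real (u powr \<alpha>)) within Y)" for Y
    by (rule has_field_derivative_at_within, rule mittag_leffler_has_field_derivative[OF a])
  have "((mittag_leffler \<alpha> 1 \<circ> (\<lambda>s. lam * complex_of_real (((t powr \<rho> - s powr \<rho>) / \<rho>) powr \<alpha>)))
      has_vector_derivative (lam * complex_of_real V' *
        (mittag_leffler \<alpha> \<alpha> (lam * complex_of_real (u powr \<alpha>)) / of_real \<alpha>))) (at s within X)"
    by (rule field_vector_diff_chain_within[OF inner]) (use outer u_def in simp)
  moreover have "lam * complex_of_real V' *
        (mittag_leffler \<alpha> \<alpha> (lam * complex_of_real (u powr \<alpha>)) / of_real \<alpha>) = - (lam * kern \<alpha> \<rho> lam t s)"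
    unfolding kern_def Let_def u_def[symmetric] V'_def using a by (simp add: field_simps)
  ultimately show ?thesis by (simp add: o_def)
qed

lemma kern_arg_powr_tendsto_at_left:
  fixes \<alpha> \<rho> t :: real
  assumes a: "0 < \<alpha>" and r: "0 < \<rho>" and t: "0 < t"
  shows "((\<lambda>s. ((t powr \<rho> - s powr \<rho>) / \<rho>) powr \<alpha>) \<longlongrightarrow> 0) (at_left t)"
proof (rule tendsto_zero_powrI)
  have "((\<lambda>s. (t powr \<rho> - s powr \<rho>) / \<rho>) \<longlongrightarrow> (t powr \<rho> - t powr \<rho>) / \<rho>) (at_left t)"
    using t r by (intro tendsto_intros) auto
  thus "((\<lambda>s. (t powr \<rho> - s powr \<rho>) / \<rho>) \<longlongrightarrow> 0) (at_left t)" by simp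
  show "\<forall>\<^sub>F s in at_left t. 0 \<le> (t powr \<rho> - s powr \<rho>) / \<rho>"
    using eventually_at_left_real[OF t]
    by eventually_elim (use r t in \<open>auto intro!: kern_arg_nonneg\<close>)
qed (use a in auto)

lemma continuous_on_kern_arg_powr:
  fixes \<alpha> \<rho> \<tau> :: real
  assumes a: "0 < \<alpha>" and r: "0 < \<rho>" and \<tau>: "0 < \<tau>"
  shows "continuous_on {\<tau>..} (\<lambda>t. ((t powr \<rho> - \<tau> powr \<rho>) / \<rho>) powr \<alpha>)"
proof (rule continuous_on_powr')
  show "continuous_on {\<tau>..} (\<lambda>t. (t powr \<rho> - \<tau> powr \<rho>) / \<rho>)"
    using \<tau> r by (intro continuous_intros) auto
  show "\<forall>t\<in>{\<tau>..}. 0 \<le> (t powr \<rho> - \<tau> powr \<rho>) / \<rho> \<and> ((t powr \<rho> - \<tau> powr \<rho>) / \<rho> = 0 \<longrightarrow> 0 < \<alpha>)"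
    using a r \<tau> by (auto intro!: kern_arg_nonneg)
qed (rule continuous_on_const)

lemma continuous_on_kern:
  assumes a: "0 < \<alpha>" and r: "0 < \<rho>"
  shows "continuous_on {p. 0 < snd p \<and> snd p < fst p} (\<lambda>p. kern \<alpha> \<rho> lam (fst p) (snd p))"
proof -
  have "(fst p powr \<rho> - snd p powr \<rho>) / \<rho> > 0" if "p \<in> {p. 0 < snd p \<and> snd p < fst p}" for p
    using kern_arg_pos[OF r, of "snd p" "fst p"] that by auto
  moreover have "x powr \<rho> \<noteq> y powr \<rho>" if "0 < y" "y < x" for x y :: real
    using powr_less_mono2[of \<rho> y x] that r by auto
  ultimately show ?thesis unfolding kern_def Let_def
    using a r by (intro continuous_intros) (auto simp: less_imp_le)
qed

lemma continuous_on_kern_right: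
  assumes "0 < \<alpha>" "0 < \<rho>" "0 < a"
  shows "continuous_on {a..<t} (kern \<alpha> \<rho> lam t)"
proof -
  have "continuous_on {a..<t} ((\<lambda>p. kern \<alpha> \<rho> lam (fst p) (snd p)) \<circ> (\<lambda>s. (t, s)))"
    by (rule continuous_on_compose, intro continuous_intros,
        rule continuous_on_subset[OF continuous_on_kern]) (use assms in auto)
  thus ?thesis by (simp add: o_def)
qed

lemma norm_mittag_leffler_kern_arg_diff_le:
  assumes a: "0 < \<alpha>" and r: "0 < \<rho>" and t0: "0 < t0" and b: "t0 \<le> b" "b < t"
    and int: "(\<lambda>s. cmod (kern \<alpha> \<rho> lam t s)) integrable_on {t0..t}"
    and C: "integral {t0..t} (\<lambda>s. cmod (kern \<alpha> \<rho> lam t s)) \<le> C"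
  shows "norm (mittag_leffler \<alpha> 1 (lam * complex_of_real (((t powr \<rho> - b powr \<rho>) / \<rho>) powr \<alpha>))
    - mittag_leffler \<alpha> 1 (lam * complex_of_real (((t powr \<rho> - t0 powr \<rho>) / \<rho>) powr \<alpha>)))
    \<le> cmod lam * C"
    (is "norm (?H b - ?H t0) \<le> _")
proof -
  have "((\<lambda>s. - (lam * kern \<alpha> \<rho> lam t s)) has_integral (?H b - ?H t0)) {t0..b}"
    by (rule fundamental_theorem_of_calculus[OF b(1)],
        rule mittag_leffler_kern_arg_has_vector_derivative[OF a r]) (use t0 b in auto)
  hence hi: "(\<lambda>s. - (lam * kern \<alpha> \<rho> lam t s)) integrable_on {t0..b}"
    and hv: "integral {t0..b} (\<lambda>s. - (lam * kern \<alpha> \<rho> lam t s)) = ?H b - ?H t0"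
    by (auto simp: has_integral_iff)
  have intb: "(\<lambda>s. cmod (kern \<alpha> \<rho> lam t s)) integrable_on {t0..b}"
    by (rule integrable_on_subinterval[OF int]) (use b in auto)
  have "norm (?H b - ?H t0) \<le> integral {t0..b} (\<lambda>s. cmod lam * cmod (kern \<alpha> \<rho> lam t s))"
    unfolding hv[symmetric]
    by (rule integral_norm_bound_integral[OF hi])
       (auto intro: integrable_on_cmult_left[OF intb, of "cmod lam", simplified] simp: norm_mult)
  also have "\<dots> \<le> cmod lam * integral {t0..t} (\<lambda>s. cmod (kern \<alpha> \<rho> lam t s))"
    by (simp, intro mult_left_mono integral_subset_le intb int) (use b in auto)
  also have "\<dots> \<le> cmod lam * C" by (intro mult_left_mono C) auto
  finally show ?thesis .
qed

text \<open>Letting \<open>b \<rightarrow> t\<close> above, where the argument of \<open>E\<^sub>\<alpha>\<close> tends to \<open>0\<close> and \<open>E\<^sub>\<alpha>(0) = 1\<close>.\<close>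
lemma norm_mittag_leffler_le:
  assumes a: "0 < \<alpha>" and r: "0 < \<rho>" and t0: "0 < t0" "t0 \<le> t"
    and int: "(\<lambda>s. cmod (kern \<alpha> \<rho> lam t s)) integrable_on {t0..t}"
    and C: "integral {t0..t} (\<lambda>s. cmod (kern \<alpha> \<rho> lam t s)) \<le> C"
  shows "cmod (mittag_leffler \<alpha> 1 (lam * complex_of_real (((t powr \<rho> - t0 powr \<rho>) / \<rho>) powr \<alpha>)))
         \<le> 1 + cmod lam * C"
proof -
  define H where
    "H s = mittag_leffler \<alpha> 1 (lam * complex_of_real (((t powr \<rho> - s powr \<rho>) / \<rho>) powr \<alpha>))" for s
  have Ht: "H t = 1" unfolding H_def by (simp add: mittag_leffler_zero)
  have C0: "C \<ge> 0" using integral_nonneg[OF int] C by force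
  have "norm (H t - H t0) \<le> cmod lam * C"
  proof (cases "t0 = t")
    case False
    hence tt: "t0 < t" using t0 by simp
    have "(H \<longlongrightarrow> mittag_leffler \<alpha> 1 (lam * complex_of_real 0)) (at_left t)"
      unfolding H_def using a kern_arg_powr_tendsto_at_left[OF a r, of t] t0
      by (intro tendsto_intros) auto
    hence "((\<lambda>b. norm (H b - H t0)) \<longlongrightarrow> norm (H t - H t0)) (at_left t)"
      using Ht by (auto simp: mittag_leffler_zero intro!: tendsto_intros)
    thus ?thesis
      by (rule tendsto_upperbound)
         (use eventually_at_left_real[OF tt] norm_mittag_leffler_kern_arg_diff_le[OF a r t0(1) _ _ int C]
           in \<open>auto simp: H_def elim!: eventually_mono\<close>)
  qed (use C0 in simp)
  hence "norm (H t0) \<le> 1 + cmod lam * C"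
    using Ht norm_triangle_ineq3[of "H t" "H t0"] by (simp add: norm_minus_commute)
  thus ?thesis unfolding H_def by simp
qed
lemma kern_mult_integrable:
  assumes "0 < \<alpha>" "0 < \<rho>" and a: "0 < a" "a \<le> t"
    and int: "(\<lambda>s. cmod (kern \<alpha> \<rho> lam t s)) integrable_on {a..t}"
    and g: "continuous_on {a..t} g" and B: "\<And>s. s \<in> {a..t} \<Longrightarrow> norm (g s) \<le> B"
  shows "(\<lambda>s. kern \<alpha> \<rho> lam t s * g s) integrable_on {a..t}"
proof -
  have ins: "{a..t} = insert t {a..<t}" using a by auto
  have "continuous_on {a..<t} (\<lambda>s. kern \<alpha> \<rho> lam t s * g s)"
    by (intro continuous_intros continuous_on_kern_right assms continuous_on_subset[OF g]) auto
  hence meas: "(\<lambda>s. kern \<alpha> \<rho> lam t s * g s) \<in> borel_measurable (lebesgue_on {a..<t})"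
    by (rule continuous_imp_measurable_on_sets_lebesgue) simp
  have dom: "(\<lambda>s. B * cmod (kern \<alpha> \<rho> lam t s)) integrable_on {a..<t}"
    using integrable_on_cmult_left[OF int, of B] ins by (simp add: integrable_on_insert_iff)
  have "(\<lambda>s. kern \<alpha> \<rho> lam t s * g s) absolutely_integrable_on {a..<t}"
  proof (rule measurable_bounded_by_integrable_imp_absolutely_integrable[OF meas _ dom])
    fix s assume "s \<in> {a..<t}"
    hence "norm (g s) \<le> B" using B by auto
    thus "norm (kern \<alpha> \<rho> lam t s * g s) \<le> B * cmod (kern \<alpha> \<rho> lam t s)"
      by (simp add: norm_mult mult.commute[of B] mult_left_mono)
  qed simp
  hence "(\<lambda>s. kern \<alpha> \<rho> lam t s * g s) integrable_on {a..<t}"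
    using set_lebesgue_integral_eq_integral(1) by blast
  thus ?thesis using ins by (simp add: integrable_on_insert_iff)
qed

lemma norm_integral_kern_mult_le:
  assumes "0 < \<alpha>" "0 < \<rho>" "0 < a" "a \<le> t"
    and int: "(\<lambda>s. cmod (kern \<alpha> \<rho> lam t s)) integrable_on {a..t}"
    and "continuous_on {a..t} g" and B: "\<And>s. s \<in> {a..t} \<Longrightarrow> norm (g s) \<le> B"
  shows "norm (integral {a..t} (\<lambda>s. kern \<alpha> \<rho> lam t s * g s))
           \<le> B * integral {a..t} (\<lambda>s. cmod (kern \<alpha> \<rho> lam t s))"
proof -
  have "norm (integral {a..t} (\<lambda>s. kern \<alpha> \<rho> lam t s * g s))
           \<le> integral {a..t} (\<lambda>s. B * cmod (kern \<alpha> \<rho> lam t s))"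
    by (rule integral_norm_bound_integral[OF kern_mult_integrable[OF assms]])
       (use integrable_on_cmult_left[OF int, of B] B
         in \<open>auto simp: norm_mult mult.commute[of B] intro: mult_left_mono\<close>)
  thus ?thesis by simp
qed

text \<open>Near the diagonal the kernel is dominated by \<open>M ((t\<^sup>\<rho> - s\<^sup>\<rho>)/\<rho>)\<^sup>\<alpha>\<^sup>-\<^sup>1 s\<^sup>\<rho>\<^sup>-\<^sup>1\<close>, whose integral over
  \<open>[\<tau>, t]\<close> is explicit.\<close>
lemma norm_integral_kern_tail_le:
  assumes a: "0 < \<alpha>" and r: "0 < \<rho>" and tau: "0 < \<tau>" "\<tau> \<le> t"
    and int: "(\<lambda>s. cmod (kern \<alpha> \<rho> lam t s)) integrable_on {\<tau>..t}"
    and g: "continuous_on {\<tau>..t} g" and B: "\<And>s. s \<in> {\<tau>..t} \<Longrightarrow> norm (g s) \<le> B"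
    and M: "\<And>s. s \<in> {\<tau>..<t} \<Longrightarrow>
       cmod (mittag_leffler \<alpha> \<alpha> (lam * complex_of_real (((t powr \<rho> - s powr \<rho>) / \<rho>) powr \<alpha>))) \<le> M"
    and B0: "0 \<le> B" and M0: "0 \<le> M"
  shows "norm (integral {\<tau>..t} (\<lambda>s. kern \<alpha> \<rho> lam t s * g s))
           \<le> B * M * (((t powr \<rho> - \<tau> powr \<rho>) / \<rho>) powr \<alpha>) / \<alpha>"
proof -
  define w where "w s = ((t powr \<rho> - s powr \<rho>) / \<rho>) powr (\<alpha> - 1) * s powr (\<rho> - 1)" for s
  define F where "F s = - (((t powr \<rho> - s powr \<rho>) / \<rho>) powr \<alpha>) / \<alpha>" for s
  have hw: "(w has_integral (F t - F \<tau>)) {\<tau>..t}"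
  proof (rule fundamental_theorem_of_calculus_interior[OF tau(2)])
    show "continuous_on {\<tau>..t} F" unfolding F_def
      using tau a r kern_arg_nonneg[OF r]
      by (intro continuous_intros continuous_on_powr') (auto simp: less_imp_le)
    fix x assume "x \<in> {\<tau><..<t}"
    hence x: "0 < x" "x < t" using tau by auto
    have "(F has_real_derivative
        (- (\<alpha> * ((t powr \<rho> - x powr \<rho>) / \<rho>) powr (\<alpha> - 1) * - (x powr (\<rho> - 1)))) / \<alpha>) (at x)"
      unfolding F_def by (intro DERIV_cdivide DERIV_minus kern_arg_powr_has_real_derivative r x)
    thus "(F has_vector_derivative w x) (at x)"
      using a by (simp add: w_def has_real_derivative_iff_has_vector_derivative)
  qed
  have bnd: "norm (kern \<alpha> \<rho> lam t s * g s) \<le> B * M * w s" if s: "s \<in> {\<tau>..t}" for s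
  proof (cases "s = t")
    case False
    hence "s \<in> {\<tau>..<t}" using s by auto
    have "norm (kern \<alpha> \<rho> lam t s) = ((t powr \<rho> - s powr \<rho>) / \<rho>) powr (\<alpha> - 1)
        * cmod (mittag_leffler \<alpha> \<alpha> (lam * complex_of_real (((t powr \<rho> - s powr \<rho>) / \<rho>) powr \<alpha>)))
        * s powr (\<rho> - 1)"
      unfolding kern_def Let_def by (simp add: norm_mult)
    also have "\<dots> \<le> ((t powr \<rho> - s powr \<rho>) / \<rho>) powr (\<alpha> - 1) * M * s powr (\<rho> - 1)"
      using \<open>s \<in> {\<tau>..<t}\<close> by (intro mult_right_mono mult_left_mono M) auto
    finally have "norm (kern \<alpha> \<rho> lam t s) \<le> M * w s" unfolding w_def by (simp add: mult_ac)
    moreover have "0 \<le> M * w s" using M0 unfolding w_def by simp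
    ultimately have "norm (kern \<alpha> \<rho> lam t s) * norm (g s) \<le> (M * w s) * B"
      by (intro mult_mono B s) auto
    thus ?thesis by (simp add: norm_mult mult_ac)
  qed (simp add: kern_def w_def Let_def)
  have "norm (integral {\<tau>..t} (\<lambda>s. kern \<alpha> \<rho> lam t s * g s)) \<le> integral {\<tau>..t} (\<lambda>s. B * M * w s)"
    by (rule integral_norm_bound_integral[OF kern_mult_integrable[OF a r tau int g B]])
       (use integrable_on_cmult_left[OF has_integral_integrable[OF hw], of "B * M"] bnd in auto)
  also have "\<dots> = B * M * (F t - F \<tau>)" using integral_unique[OF hw] by simp
  finally show ?thesis unfolding F_def by simp
qed

lemma continuous_within_by_approximation:
  fixes I :: "'a::t2_space \<Rightarrow> 'b::metric_space"
  assumes "\<And>e. 0 < e \<Longrightarrow> \<exists>J. continuous (at x within S) J \<and> dist (I x) (J x) < e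
             \<and> (\<forall>\<^sub>F y in at x within S. dist (I y) (J y) < e)"
  shows "continuous (at x within S) I"
  unfolding continuous_within tendsto_iff
proof (intro allI impI)
  fix e :: real assume "0 < e"
  then obtain J where J: "(J \<longlongrightarrow> J x) (at x within S)" "dist (I x) (J x) < e / 3"
    and IJ: "\<forall>\<^sub>F y in at x within S. dist (I y) (J y) < e / 3"
    using assms[of "e / 3"] by (auto simp: continuous_within)
  have "\<forall>\<^sub>F y in at x within S. dist (J y) (J x) < e / 3"
    using tendstoD[OF J(1), of "e / 3"] \<open>0 < e\<close> by simp
  with IJ show "\<forall>\<^sub>F y in at x within S. dist (I y) (I x) < e"
  proof eventually_elim
    case (elim y)
    have "dist (I y) (I x) \<le> dist (I y) (J y) + dist (J y) (I x)" by (rule dist_triangle)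
    also have "dist (J y) (I x) \<le> dist (J y) (J x) + dist (J x) (I x)" by (rule dist_triangle)
    finally show ?case using elim J(2) by (simp add: dist_commute)
  qed
qed

lemma continuous_on_integral_kern_initial_part:
  assumes "0 < \<alpha>" "0 < \<rho>" "0 < t0" and g: "continuous_on {t0..\<tau>} g"
  shows "continuous_on {\<tau><..} (\<lambda>t. integral {t0..\<tau>} (\<lambda>s. kern \<alpha> \<rho> lam t s * g s))"
proof -
  have "continuous_on ({\<tau><..} \<times> cbox t0 \<tau>) (\<lambda>p. kern \<alpha> \<rho> lam (fst p) (snd p))"
    by (rule continuous_on_subset[OF continuous_on_kern]) (use assms in auto)
  moreover have "continuous_on ({\<tau><..} \<times> cbox t0 \<tau>) (\<lambda>p. g (snd p))"
    by (rule continuous_on_compose2[OF g continuous_on_snd]) auto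
  ultimately have "continuous_on ({\<tau><..} \<times> cbox t0 \<tau>) (\<lambda>(t, s). kern \<alpha> \<rho> lam t s * g s)"
    using continuous_on_mult by (fastforce simp: case_prod_beta')
  from integral_continuous_on_param[OF this] show ?thesis by (simp add: cbox_interval)
qed
lemma norm_integral_kern_tail_le_uniform:
  fixes \<alpha> \<rho> t0 B T :: real
  assumes a: "0 < \<alpha>" and r: "0 < \<rho>" and t0: "0 < t0"
    and int: "\<And>t. t0 \<le> t \<Longrightarrow> (\<lambda>s. cmod (kern \<alpha> \<rho> lam t s)) integrable_on {t0..t}"
    and g: "continuous_on {t0..} g" and B: "\<And>s. t0 \<le> s \<Longrightarrow> norm (g s) \<le> B"
  obtains K where "\<And>\<tau> t. t0 \<le> \<tau> \<Longrightarrow> \<tau> \<le> t \<Longrightarrow> t \<le> T \<Longrightarrow>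
    norm (integral {\<tau>..t} (\<lambda>s. kern \<alpha> \<rho> lam t s * g s)) \<le> K * ((t powr \<rho> - \<tau> powr \<rho>) / \<rho>) powr \<alpha>"
proof -
  obtain M where M0: "0 \<le> M" and M: "\<And>w. norm w \<le> cmod lam * (T powr \<rho> / \<rho>) powr \<alpha> \<Longrightarrow>
      cmod (mittag_leffler \<alpha> \<alpha> w) \<le> M"
    using mittag_leffler_bounded_on_cball[OF a a] by blast
  have M_kern: "cmod (mittag_leffler \<alpha> \<alpha> (lam * complex_of_real (((t powr \<rho> - s powr \<rho>) / \<rho>) powr \<alpha>))) \<le> M"
    if "0 < s" "s \<le> t" "t \<le> T" for s t
  proof (rule M)
    have "t powr \<rho> \<le> T powr \<rho>" by (rule powr_mono2) (use that r in auto)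
    hence "t powr \<rho> - s powr \<rho> \<le> T powr \<rho>" using powr_ge_zero[of s \<rho>] by linarith
    hence "(t powr \<rho> - s powr \<rho>) / \<rho> \<le> T powr \<rho> / \<rho>" using r by (simp add: divide_right_mono)
    hence "((t powr \<rho> - s powr \<rho>) / \<rho>) powr \<alpha> \<le> (T powr \<rho> / \<rho>) powr \<alpha>"
      using kern_arg_nonneg[OF r that(1,2)] a by (intro powr_mono2) auto
    thus "norm (lam * complex_of_real (((t powr \<rho> - s powr \<rho>) / \<rho>) powr \<alpha>))
        \<le> cmod lam * (T powr \<rho> / \<rho>) powr \<alpha>"
      by (simp add: norm_mult mult_left_mono)
  qed
  have B0: "0 \<le> B" using B[of t0] norm_ge_zero order_trans by blast
  show ?thesis
  proof (rule that[of "B * M / \<alpha>"])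
    fix \<tau> t assume \<tau>: "t0 \<le> \<tau>" "\<tau> \<le> t" "t \<le> T"
    have "norm (integral {\<tau>..t} (\<lambda>s. kern \<alpha> \<rho> lam t s * g s))
        \<le> B * M * (((t powr \<rho> - \<tau> powr \<rho>) / \<rho>) powr \<alpha>) / \<alpha>"
      by (rule norm_integral_kern_tail_le[OF a r _ _ _ _ _ _ B0 M0])
         (use \<tau> t0 int[of t] in \<open>auto intro: integrable_on_subinterval continuous_on_subset[OF g] B M_kern\<close>)
    thus "norm (integral {\<tau>..t} (\<lambda>s. kern \<alpha> \<rho> lam t s * g s))
        \<le> B * M / \<alpha> * ((t powr \<rho> - \<tau> powr \<rho>) / \<rho>) powr \<alpha>" by simp
  qed
qed

lemma kern_arg_powr_small_near_left:
  fixes \<alpha> \<rho> t0 x K e :: real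
  assumes a: "0 < \<alpha>" and r: "0 < \<rho>" and t0: "0 < t0" "t0 \<le> x" and e: "0 < e"
  obtains \<tau> where "t0 \<le> \<tau>" "\<tau> \<le> x" "\<tau> = t0 \<or> \<tau> < x"
    "K * ((x powr \<rho> - \<tau> powr \<rho>) / \<rho>) powr \<alpha> < e"
proof (cases "x = t0")
  case True
  thus ?thesis using that[of t0] e by simp
next
  case False
  hence xt: "t0 < x" using t0 by simp
  have "((\<lambda>\<tau>. K * ((x powr \<rho> - \<tau> powr \<rho>) / \<rho>) powr \<alpha>) \<longlongrightarrow> K * 0) (at_left x)"
    by (intro tendsto_intros kern_arg_powr_tendsto_at_left a r) (use t0 xt in auto)
  hence "\<forall>\<^sub>F \<tau> in at_left x. K * ((x powr \<rho> - \<tau> powr \<rho>) / \<rho>) powr \<alpha> < e"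
    by (rule order_tendstoD(2)) (use e in simp)
  hence "\<forall>\<^sub>F \<tau> in at_left x. K * ((x powr \<rho> - \<tau> powr \<rho>) / \<rho>) powr \<alpha> < e \<and> \<tau> \<in> {t0<..<x}"
    using eventually_at_left_real[OF xt] by (rule eventually_conj)
  then obtain \<tau> where "K * ((x powr \<rho> - \<tau> powr \<rho>) / \<rho>) powr \<alpha> < e" "\<tau> \<in> {t0<..<x}"
    using eventually_happens[of _ "at_left x"] by auto
  thus ?thesis using that[of \<tau>] by auto
qed

lemma eventually_split_point_le:
  fixes \<tau> t0 x :: real
  assumes "\<tau> = t0 \<or> \<tau> < x"
  shows "\<forall>\<^sub>F y in at x within {t0..}. \<tau> \<le> y"
  using assms
proof
  assume "\<tau> < x"
  show ?thesis by (rule eventually_mono[OF order_tendstoD(1)[OF tendsto_ident_at \<open>\<tau> < x\<close>]]) simp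
qed (simp add: eventually_at_filter)

lemma continuous_within_split_point:
  fixes \<tau> t0 x :: real
  assumes "\<tau> = t0 \<or> \<tau> < x" "t0 \<le> x" and f: "continuous_on {\<tau>..} f"
  shows "continuous (at x within {t0..}) f"
  using assms(1)
proof
  assume "\<tau> < x"
  have "continuous (at x) f"
    by (rule continuous_on_interior[OF f]) (use \<open>\<tau> < x\<close> in simp)
  thus ?thesis by (rule continuous_at_imp_continuous_at_within)
qed (use f assms(2) in \<open>simp add: continuous_on_eq_continuous_within del: continuous_within\<close>)

lemma continuous_within_integral_kern_initial_part:
  fixes \<tau> t0 x :: real
  assumes a: "0 < \<alpha>" and r: "0 < \<rho>" and t0: "0 < t0" "t0 \<le> \<tau>" and \<tau>: "\<tau> = t0 \<or> \<tau> < x"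
    and g: "continuous_on {t0..\<tau>} g"
  shows "continuous (at x within {t0..}) (\<lambda>t. integral {t0..\<tau>} (\<lambda>s. kern \<alpha> \<rho> lam t s * g s))"
  using \<tau>
proof
  assume "\<tau> < x"
  have "continuous (at x) (\<lambda>t. integral {t0..\<tau>} (\<lambda>s. kern \<alpha> \<rho> lam t s * g s))"
    by (rule continuous_on_interior[OF continuous_on_integral_kern_initial_part[OF a r t0(1) g]])
       (use \<open>\<tau> < x\<close> in \<open>simp add: interior_open\<close>)
  thus ?thesis by (rule continuous_at_imp_continuous_at_within)
qed simp

text \<open>Continuity at \<open>x\<close>: split the integral at a point \<open>\<tau> \<le> x\<close> so close to \<open>x\<close> (or \<open>\<tau> = t\<^sub>0 = x\<close>)
  that the tail over \<open>[\<tau>, t]\<close> is small for all \<open>t\<close> near \<open>x\<close>; over \<open>[t\<^sub>0, \<tau>]\<close> the kernel is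
  continuous in \<open>t\<close>.\<close>
lemma continuous_on_integral_kern:
  fixes \<alpha> \<rho> t0 B :: real
  assumes a: "0 < \<alpha>" and r: "0 < \<rho>" and t0: "0 < t0"
    and int: "\<And>t. t0 \<le> t \<Longrightarrow> (\<lambda>s. cmod (kern \<alpha> \<rho> lam t s)) integrable_on {t0..t}"
    and g: "continuous_on {t0..} g" and B: "\<And>s. t0 \<le> s \<Longrightarrow> norm (g s) \<le> B"
  shows "continuous_on {t0..} (\<lambda>t. integral {t0..t} (\<lambda>s. kern \<alpha> \<rho> lam t s * g s))"
  unfolding continuous_on_eq_continuous_within
proof (intro ballI continuous_within_by_approximation)
  fix x e :: real assume x: "x \<in> {t0..}" and e: "0 < e"
  define I where "I t = integral {t0..t} (\<lambda>s. kern \<alpha> \<rho> lam t s * g s)" for t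
  obtain K where tail: "\<And>\<tau> t. t0 \<le> \<tau> \<Longrightarrow> \<tau> \<le> t \<Longrightarrow> t \<le> x + 1 \<Longrightarrow>
      norm (integral {\<tau>..t} (\<lambda>s. kern \<alpha> \<rho> lam t s * g s)) \<le> K * ((t powr \<rho> - \<tau> powr \<rho>) / \<rho>) powr \<alpha>"
    using norm_integral_kern_tail_le_uniform[OF a r t0 int g B] by blast
  define om where "om \<tau> t = K * ((t powr \<rho> - \<tau> powr \<rho>) / \<rho>) powr \<alpha>" for \<tau> t
  obtain \<tau> where \<tau>: "t0 \<le> \<tau>" "\<tau> \<le> x" "\<tau> = t0 \<or> \<tau> < x" "om \<tau> x < e"
    using kern_arg_powr_small_near_left[OF a r t0 _ e] x unfolding om_def by auto
  define J where "J t = integral {t0..\<tau>} (\<lambda>s. kern \<alpha> \<rho> lam t s * g s)" for t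
  have J_cont: "continuous (at x within {t0..}) J"
    unfolding J_def
    by (rule continuous_within_integral_kern_initial_part[OF a r t0 \<tau>(1,3) continuous_on_subset[OF g]])
       auto
  have om_on: "continuous_on {\<tau>..} (om \<tau>)"
    unfolding om_def using \<tau> t0 by (intro continuous_on_mult_left continuous_on_kern_arg_powr a r) auto
  have om_cont: "continuous (at x within {t0..}) (om \<tau>)"
    by (rule continuous_within_split_point[OF \<tau>(3) _ om_on]) (use x in simp)
  have I_split: "dist (I t) (J t) \<le> om \<tau> t" if "\<tau> \<le> t" "t \<le> x + 1" for t
  proof -
    have "(\<lambda>s. kern \<alpha> \<rho> lam t s * g s) integrable_on {t0..t}"
      using \<tau> that
      by (intro kern_mult_integrable[OF a r t0 _ int continuous_on_subset[OF g], where B=B] B) auto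
    hence "I t = J t + integral {\<tau>..t} (\<lambda>s. kern \<alpha> \<rho> lam t s * g s)"
      unfolding I_def J_def using \<tau> that
      by (simp add: Henstock_Kurzweil_Integration.integral_combine)
    thus ?thesis using tail[OF \<tau>(1) that] by (simp add: dist_norm om_def)
  qed
  show "\<exists>J. continuous (at x within {t0..}) J \<and> dist (I x) (J x) < e
          \<and> (\<forall>\<^sub>F y in at x within {t0..}. dist (I y) (J y) < e)"
  proof (intro exI conjI)
    show "dist (I x) (J x) < e" using I_split[of x] \<tau> by simp
    have "\<forall>\<^sub>F y in at x within {t0..}. om \<tau> y < e"
      using order_tendstoD(2)[OF om_cont[unfolded continuous_within] \<tau>(4)] .
    moreover have "\<forall>\<^sub>F y in at x within {t0..}. y < x + 1"
      using order_tendstoD(2)[OF tendsto_ident_at, of x "x + 1"] by simp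
    ultimately show "\<forall>\<^sub>F y in at x within {t0..}. dist (I y) (J y) < e"
      using eventually_split_point_le[OF \<tau>(3)]
      by eventually_elim (use I_split in fastforce)
  qed (rule J_cont)
qed
lemma nth_le_cnorm: "cmod (x $ k) \<le> cnorm x"
  unfolding cnorm_def by (rule Max_ge) auto

lemma cnorm_leI: "(\<And>k. cmod (x $ k) \<le> c) \<Longrightarrow> cnorm x \<le> c"
  unfolding cnorm_def by (subst Max_le_iff) auto

lemma cnorm_nonneg: "0 \<le> cnorm x"
  using nth_le_cnorm[of x] norm_ge_zero order_trans by blast

lemma cnorm_zero [simp]: "cnorm 0 = 0"
  by (intro antisym cnorm_leI cnorm_nonneg) simp

lemma cnorm_pos: "x \<noteq> 0 \<Longrightarrow> 0 < cnorm x"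
  using nth_le_cnorm[of x] by (metis less_le_trans vec_eq_iff zero_index zero_less_norm_iff)

lemma cnorm_triangle: "cnorm (x + y) \<le> cnorm x + cnorm y"
proof (rule cnorm_leI)
  fix k
  have "cmod ((x + y) $ k) \<le> cmod (x $ k) + cmod (y $ k)" by (simp add: norm_triangle_ineq)
  thus "cmod ((x + y) $ k) \<le> cnorm x + cnorm y" using nth_le_cnorm[of x k] nth_le_cnorm[of y k] by linarith
qed

lemma cnorm_diff_le: "cnorm (x - y) \<le> cnorm x + cnorm y"
proof (rule cnorm_leI)
  fix k
  have "cmod ((x - y) $ k) \<le> cmod (x $ k) + cmod (y $ k)" by (simp add: norm_triangle_ineq4)
  thus "cmod ((x - y) $ k) \<le> cnorm x + cnorm y" using nth_le_cnorm[of x k] nth_le_cnorm[of y k] by linarith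
qed

lemma cnorm_le_norm: "cnorm x \<le> norm x"
  by (rule cnorm_leI) (rule Finite_Cartesian_Product.norm_nth_le)

lemma norm_le_cnorm: "norm x \<le> of_nat CARD('d) * cnorm (x :: complex ^ 'd)"
proof -
  have "norm x \<le> (\<Sum>i\<in>UNIV. norm (x $ i))" by (simp add: norm_vec_def L2_set_le_sum)
  also have "\<dots> \<le> (\<Sum>i\<in>(UNIV::'d set). cnorm x)" by (intro sum_mono nth_le_cnorm)
  finally show ?thesis by simp
qed

lemma nth_le_rnorm: "\<bar>x $ k\<bar> \<le> rnorm x"
  unfolding rnorm_def by (rule Max_ge) auto

lemma rnorm_leI: "(\<And>k. \<bar>x $ k\<bar> \<le> c) \<Longrightarrow> rnorm x \<le> c"
  unfolding rnorm_def by (subst Max_le_iff) auto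

lemma rnorm_nonneg: "0 \<le> rnorm x"
  using nth_le_rnorm[of x] abs_ge_zero order_trans by blast

lemma rnorm_zero [simp]: "rnorm 0 = 0"
  using nth_le_rnorm[of 0] by (intro antisym rnorm_leI) auto

lemma rnorm_pos: "x \<noteq> 0 \<Longrightarrow> 0 < rnorm x"
proof -
  assume "x \<noteq> 0"
  then obtain k where "x $ k \<noteq> 0" by (auto simp: vec_eq_iff)
  thus ?thesis using nth_le_rnorm[of x k] by linarith
qed

lemma rnorm_re_vec_le: "rnorm (re_vec w) \<le> cnorm w"
proof (rule rnorm_leI)
  fix k show "\<bar>re_vec w $ k\<bar> \<le> cnorm w"
    using abs_Re_le_cmod[of "w $ k"] nth_le_cnorm[of w k] by (simp add: re_vec_def)
qed

lemma cnorm_cvec_of_diff_le: "cnorm (cvec_of a - cvec_of b) \<le> rnorm (a - b)"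
  by (rule cnorm_leI) (use nth_le_rnorm[of "a - b"] in \<open>simp add: cvec_of_def flip: of_real_diff\<close>)

definition entry_abs_sum :: "complex ^ 'd ^ 'e \<Rightarrow> real" where
  "entry_abs_sum B = (\<Sum>i\<in>UNIV. \<Sum>j\<in>UNIV. cmod (B $ i $ j))"

lemma entry_abs_sum_nonneg: "0 \<le> entry_abs_sum B"
  unfolding entry_abs_sum_def by (intro sum_nonneg) auto

lemma cnorm_mult_vec_le: "cnorm (B *v v) \<le> entry_abs_sum B * cnorm v"
proof (rule cnorm_leI)
  fix i
  have "cmod ((B *v v) $ i) \<le> (\<Sum>j\<in>UNIV. cmod (B $ i $ j) * cnorm v)"
    unfolding matrix_vector_mult_def
    by (simp, rule order_trans[OF norm_sum sum_mono])
       (auto simp: norm_mult intro: mult_left_mono nth_le_cnorm)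
  also have "\<dots> = (\<Sum>j\<in>UNIV. cmod (B $ i $ j)) * cnorm v" by (simp add: sum_distrib_right)
  also have "\<dots> \<le> entry_abs_sum B * cnorm v"
    unfolding entry_abs_sum_def
    by (intro mult_right_mono cnorm_nonneg member_le_sum[of i UNIV "\<lambda>i. \<Sum>j\<in>UNIV. cmod (B $ i $ j)"])
       (auto intro: sum_nonneg)
  finally show "cmod ((B *v v) $ i) \<le> entry_abs_sum B * cnorm v" .
qed

lemma lip_const_le:
  fixes nrm :: "'a::ab_group_add \<Rightarrow> real"
  assumes nrm_zero: "nrm 0 = 0" and nrm_pos: "\<And>x. x \<noteq> 0 \<Longrightarrow> 0 < nrm x"
    and bdd: "bdd_above (lip_quot nrm g r)" and "nrm x \<le> r" "nrm y \<le> r"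
  shows "nrm (g x - g y) \<le> lip_const nrm g r * nrm (x - y)"
proof (cases "x = y")
  case False
  hence "nrm (g x - g y) / nrm (x - y) \<in> lip_quot nrm g r"
    unfolding lip_quot_def using assms by blast
  hence "nrm (g x - g y) / nrm (x - y) \<le> lip_const nrm g r"
    unfolding lip_const_def by (rule cSup_upper[OF _ bdd])
  thus ?thesis using nrm_pos[of "x - y"] False by (simp add: divide_le_eq mult.commute)
qed (simp add: nrm_zero)

lemma bdd_above_lip_quotI:
  fixes nrm :: "'a::ab_group_add \<Rightarrow> real"
  assumes nrm_pos: "\<And>x. x \<noteq> 0 \<Longrightarrow> 0 < nrm x"
    and lip: "\<And>x y. nrm x \<le> r \<Longrightarrow> nrm y \<le> r \<Longrightarrow> nrm (g x - g y) \<le> K * nrm (x - y)"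
  shows "bdd_above (lip_quot nrm g r)"
proof (rule bdd_aboveI)
  fix u assume "u \<in> lip_quot nrm g r"
  then obtain x y where "u = nrm (g x - g y) / nrm (x - y)" "nrm x \<le> r" "nrm y \<le> r" "x \<noteq> y"
    unfolding lip_quot_def by blast
  thus "u \<le> K" using lip nrm_pos[of "x - y"] by (simp add: divide_le_eq)
qed

lemma lip_const_cnorm_nonneg:
  fixes g :: "complex ^ 'd \<Rightarrow> complex ^ 'd"
  assumes bdd: "bdd_above (lip_quot cnorm g r)" and r: "0 < r"
  shows "0 \<le> lip_const cnorm g r"
proof -
  define y :: "complex ^ 'd" where "y = (\<chi> i. complex_of_real r)"
  have "cnorm y \<le> r" "cnorm (0 :: complex ^ 'd) \<le> r" "y \<noteq> 0"
    using r by (auto simp: y_def vec_eq_iff intro!: cnorm_leI)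
  hence "cnorm (g y - g 0) / cnorm (y - 0) \<in> lip_quot cnorm g r"
    unfolding lip_quot_def
    by blast
  thus ?thesis unfolding lip_const_def by (rule cSup_upper2[OF _ _ bdd]) (simp add: cnorm_nonneg)
qed

lemma re_vec_zero [simp]: "re_vec 0 = 0"
  by (simp add: re_vec_def vec_eq_iff)

lemma cvec_of_zero [simp]: "cvec_of 0 = 0"
  by (simp add: cvec_of_def vec_eq_iff)

lemma hfun_zero: "f 0 = 0 \<Longrightarrow> hfun blk pos eta \<delta> T f 0 = 0"
  unfolding hfun_def by simp

lemma cnorm_hfun_diff_le:
  fixes f :: "real ^ 'd \<Rightarrow> real ^ 'd" and T :: "complex ^ 'd ^ 'd" and pos :: "'d \<Rightarrow> nat"
    and \<delta> :: real
  defines "P \<equiv> T ** scale_mat pos \<delta>"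
  assumes f_lip: "\<And>a b. rnorm a \<le> entry_abs_sum P * r \<Longrightarrow> rnorm b \<le> entry_abs_sum P * r \<Longrightarrow>
      rnorm (f a - f b) \<le> K * rnorm (a - b)"
    and K: "0 \<le> K" and y: "cnorm y \<le> r" and z: "cnorm z \<le> r"
  shows "cnorm (hfun blk pos eta \<delta> T f y - hfun blk pos eta \<delta> T f z)
    \<le> (entry_abs_sum (nil_mat blk pos eta \<delta>) + entry_abs_sum (matrix_inv P) * K * entry_abs_sum P)
       * cnorm (y - z)"
proof -
  define a where "a = re_vec (P *v y)"
  define b where "b = re_vec (P *v z)"
  have ball: "rnorm (re_vec (P *v w)) \<le> entry_abs_sum P * r" if "cnorm w \<le> r" for w
    using rnorm_re_vec_le[of "P *v w"] cnorm_mult_vec_le[of P w]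
      mult_left_mono[OF that entry_abs_sum_nonneg[of P]] by linarith
  have "a - b = re_vec (P *v (y - z))"
    unfolding a_def b_def by (simp add: re_vec_def vec_eq_iff matrix_vector_mult_diff_distrib)
  hence ab: "rnorm (a - b) \<le> entry_abs_sum P * cnorm (y - z)"
    using rnorm_re_vec_le cnorm_mult_vec_le order_trans by metis
  have "cnorm (cvec_of (f a) - cvec_of (f b)) \<le> K * (entry_abs_sum P * cnorm (y - z))"
    using cnorm_cvec_of_diff_le f_lip[OF ball[OF y] ball[OF z], folded a_def b_def]
      mult_left_mono[OF ab K] by (meson order_trans)
  moreover have "hfun blk pos eta \<delta> T f y - hfun blk pos eta \<delta> T f z
      = nil_mat blk pos eta \<delta> *v (y - z) + matrix_inv P *v (cvec_of (f a) - cvec_of (f b))"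
    unfolding hfun_def P_def a_def b_def by (simp add: matrix_vector_mult_diff_distrib algebra_simps)
  ultimately have "cnorm (hfun blk pos eta \<delta> T f y - hfun blk pos eta \<delta> T f z)
      \<le> entry_abs_sum (nil_mat blk pos eta \<delta>) * cnorm (y - z)
        + entry_abs_sum (matrix_inv P) * (K * (entry_abs_sum P * cnorm (y - z)))"
    using cnorm_triangle cnorm_mult_vec_le mult_left_mono[OF _ entry_abs_sum_nonneg]
    by (smt (verit, ccfv_threshold))
  thus ?thesis by (simp add: algebra_simps)
qed

lemma bdd_above_lip_quot_hfun:
  fixes f :: "real ^ 'd \<Rightarrow> real ^ 'd"
  assumes f_loclip: "\<And>R. 0 < R \<Longrightarrow> bdd_above (lip_quot rnorm f R)"
  shows "bdd_above (lip_quot cnorm (hfun blk pos eta \<delta> T f) r)"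
proof -
  define P where "P = T ** scale_mat pos \<delta>"
  define R where "R = entry_abs_sum P * max 0 r + 1"
  have R: "0 < R" unfolding R_def using entry_abs_sum_nonneg[of P] by (simp add: add_nonneg_pos)
  have PR: "entry_abs_sum P * r \<le> R"
    unfolding R_def using mult_left_mono[of r "max 0 r" "entry_abs_sum P"] entry_abs_sum_nonneg[of P]
    by simp
  define K where "K = max 0 (lip_const rnorm f R)"
  have f_lip: "rnorm (f a - f b) \<le> K * rnorm (a - b)"
    if "rnorm a \<le> entry_abs_sum P * r" "rnorm b \<le> entry_abs_sum P * r" for a b
  proof -
    have "rnorm (f a - f b) \<le> lip_const rnorm f R * rnorm (a - b)"
      using lip_const_le[OF rnorm_zero rnorm_pos f_loclip[OF R]] that PR by simp
    also have "\<dots> \<le> K * rnorm (a - b)"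
      unfolding K_def by (intro mult_right_mono rnorm_nonneg) simp
    finally show ?thesis .
  qed
  show ?thesis
  proof (rule bdd_above_lip_quotI[OF cnorm_pos])
    fix y z :: "complex ^ 'd" assume "cnorm y \<le> r" "cnorm z \<le> r"
    thus "cnorm (hfun blk pos eta \<delta> T f y - hfun blk pos eta \<delta> T f z)
      \<le> (entry_abs_sum (nil_mat blk pos eta \<delta>) + entry_abs_sum (matrix_inv P) * K * entry_abs_sum P)
         * cnorm (y - z)"
      unfolding P_def by (intro cnorm_hfun_diff_le f_lip[unfolded P_def]) (auto simp: K_def)
  qed
qed
lemma cnorm_le_sup_norm:
  "\<xi> \<in> Cinf t0 \<Longrightarrow> t0 \<le> t \<Longrightarrow> cnorm (\<xi> t) \<le> sup_norm t0 \<xi>"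
  unfolding Cinf_def sup_norm_def by (intro cSUP_upper) auto

lemma sup_norm_le:
  "(\<And>t. t0 \<le> t \<Longrightarrow> cnorm (\<xi> t) \<le> c) \<Longrightarrow> sup_norm t0 \<xi> \<le> c"
  unfolding sup_norm_def by (rule cSUP_least) auto

lemma Cball_le: "\<xi> \<in> Cball t0 r \<Longrightarrow> t0 \<le> t \<Longrightarrow> cnorm (\<xi> t) \<le> r"
  unfolding Cball_def using cnorm_le_sup_norm order_trans by blast

lemma Cball_continuous_on: "\<xi> \<in> Cball t0 r \<Longrightarrow> continuous_on {t0..} \<xi>"
  unfolding Cball_def Cinf_def by blast

lemma mem_CballI:
  assumes "continuous_on {t0..} \<xi>" "\<And>t. t0 \<le> t \<Longrightarrow> cnorm (\<xi> t) \<le> r"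
  shows "\<xi> \<in> Cball t0 r"
  using assms sup_norm_le[of t0 \<xi> r] unfolding Cball_def Cinf_def
  by (auto intro: bdd_aboveI2[where M=r])

lemma Cball_diff_mem_Cinf:
  assumes "\<xi> \<in> Cball t0 r" "\<xi>' \<in> Cball t0 r"
  shows "(\<lambda>t. \<xi> t - \<xi>' t) \<in> Cinf t0"
proof -
  have "cnorm (\<xi> t - \<xi>' t) \<le> r + r" if "t0 \<le> t" for t
    using cnorm_diff_le[of "\<xi> t" "\<xi>' t"] add_mono[OF Cball_le[OF assms(1) that] Cball_le[OF assms(2) that]]
    by linarith
  thus ?thesis
    unfolding Cinf_def using Cball_continuous_on[OF assms(1)] Cball_continuous_on[OF assms(2)]
    by (auto intro: continuous_on_diff bdd_aboveI2[where M="r + r"])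
qed

locale Fop_contraction =
  fixes \<alpha> \<rho> t0 C L r :: real and n :: nat and blk :: "'d::finite \<Rightarrow> nat" and lam :: "nat \<Rightarrow> complex"
    and h :: "complex ^ 'd \<Rightarrow> complex ^ 'd"
  assumes alpha_pos: "0 < \<alpha>" and rho_pos: "0 < \<rho>" and t0_pos: "0 < t0"
    and blk_less: "\<And>k. blk k < n"
    and kern_integrable: "\<And>i t. i < n \<Longrightarrow> t0 \<le> t \<Longrightarrow>
      (\<lambda>s. cmod (kern \<alpha> \<rho> (lam i) t s)) integrable_on {t0..t}"
    and kern_integral_le: "\<And>i t. i < n \<Longrightarrow> t0 \<le> t \<Longrightarrow>
      integral {t0..t} (\<lambda>s. cmod (kern \<alpha> \<rho> (lam i) t s)) \<le> C"
    and h_zero: "h 0 = 0" and L_nonneg: "0 \<le> L"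
    and h_lipschitz: "\<And>y z. cnorm y \<le> r \<Longrightarrow> cnorm z \<le> r \<Longrightarrow> cnorm (h y - h z) \<le> L * cnorm (y - z)"
begin

definition ml_sup :: real where
  "ml_sup = Max ((\<lambda>i. SUP t\<in>{t0..}. cmod (mittag_leffler \<alpha> 1
      (lam i * complex_of_real (((t powr \<rho> - t0 powr \<rho>) / \<rho>) powr \<alpha>)))) ` {..<n})"

lemma norm_mittag_leffler_le_ml_sup:
  assumes "i < n" "t0 \<le> t"
  shows "cmod (mittag_leffler \<alpha> 1 (lam i * complex_of_real (((t powr \<rho> - t0 powr \<rho>) / \<rho>) powr \<alpha>)))
    \<le> ml_sup"
proof -
  have "bdd_above ((\<lambda>t. cmod (mittag_leffler \<alpha> 1
      (lam i * complex_of_real (((t powr \<rho> - t0 powr \<rho>) / \<rho>) powr \<alpha>)))) ` {t0..})"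
    using norm_mittag_leffler_le[OF alpha_pos rho_pos t0_pos _ kern_integrable kern_integral_le]
      assms(1) by (intro bdd_aboveI2) auto
  hence "cmod (mittag_leffler \<alpha> 1 (lam i * complex_of_real (((t powr \<rho> - t0 powr \<rho>) / \<rho>) powr \<alpha>)))
      \<le> (SUP t\<in>{t0..}. cmod (mittag_leffler \<alpha> 1
            (lam i * complex_of_real (((t powr \<rho> - t0 powr \<rho>) / \<rho>) powr \<alpha>))))"
    using assms(2) by (intro cSUP_upper) auto
  also have "\<dots> \<le> ml_sup" unfolding ml_sup_def using assms(1) by (intro Max_ge) auto
  finally show ?thesis .
qed

lemma ml_sup_ge_one: "1 \<le> ml_sup"
  using norm_mittag_leffler_le_ml_sup[OF blk_less order_refl] by (simp add: mittag_leffler_zero)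

lemma Cball_h_continuous_on:
  assumes "\<xi> \<in> Cball t0 r"
  shows "continuous_on {t0..} (\<lambda>s. h (\<xi> s))"
proof -
  have "(of_nat CARD('d) * L)-lipschitz_on {y. cnorm y \<le> r} h"
  proof (rule lipschitz_onI)
    fix y z :: "complex ^ 'd" assume "y \<in> {y. cnorm y \<le> r}" "z \<in> {y. cnorm y \<le> r}"
    hence "cnorm (h y - h z) \<le> L * cnorm (y - z)" by (intro h_lipschitz) auto
    also have "\<dots> \<le> L * dist y z"
      unfolding dist_norm by (rule mult_left_mono[OF cnorm_le_norm L_nonneg])
    finally have hyz: "cnorm (h y - h z) \<le> L * dist y z" .
    have "dist (h y) (h z) \<le> of_nat CARD('d) * cnorm (h y - h z)"
      using norm_le_cnorm[of "h y - h z"] by (simp add: dist_norm)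
    also have "\<dots> \<le> of_nat CARD('d) * (L * dist y z)" using hyz by (rule mult_left_mono) simp
    finally show "dist (h y) (h z) \<le> of_nat CARD('d) * L * dist y z" by (simp add: mult.assoc)
  qed (use L_nonneg in simp)
  hence "continuous_on {y. cnorm y \<le> r} h" by (rule lipschitz_on_continuous_on)
  thus ?thesis
    by (rule continuous_on_compose2[OF _ Cball_continuous_on[OF assms]]) (use Cball_le[OF assms] in auto)
qed

lemma Cball_h_le:
  assumes "\<xi> \<in> Cball t0 r" "t0 \<le> s"
  shows "cmod (h (\<xi> s) $ k) \<le> L * r"
proof -
  have "cmod (h (\<xi> s) $ k) \<le> cnorm (h (\<xi> s) - h 0)" using nth_le_cnorm h_zero by simp
  also have "\<dots> \<le> L * cnorm (\<xi> s)"
    using h_lipschitz[of "\<xi> s" 0] Cball_le[OF assms] cnorm_nonneg[of "\<xi> s"] by simp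
  also have "\<dots> \<le> L * r" by (rule mult_left_mono[OF Cball_le[OF assms] L_nonneg])
  finally show ?thesis .
qed

lemma Fop_nth:
  "Fop \<alpha> \<rho> t0 blk lam h x \<xi> t $ k =
     mittag_leffler \<alpha> 1 (lam (blk k) * complex_of_real (((t powr \<rho> - t0 powr \<rho>) / \<rho>) powr \<alpha>)) * x $ k
     + integral {t0..t} (\<lambda>s. kern \<alpha> \<rho> (lam (blk k)) t s * h (\<xi> s) $ k)"
  unfolding Fop_def by simp

lemma norm_integral_kern_le:
  assumes "continuous_on {t0..} g" "\<And>s. t0 \<le> s \<Longrightarrow> norm (g s) \<le> B" "0 \<le> B" "t0 \<le> t"
  shows "norm (integral {t0..t} (\<lambda>s. kern \<alpha> \<rho> (lam (blk k)) t s * g s)) \<le> B * C"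
proof -
  have "norm (integral {t0..t} (\<lambda>s. kern \<alpha> \<rho> (lam (blk k)) t s * g s))
      \<le> B * integral {t0..t} (\<lambda>s. cmod (kern \<alpha> \<rho> (lam (blk k)) t s))"
    using assms
    by (intro norm_integral_kern_mult_le alpha_pos rho_pos t0_pos kern_integrable blk_less)
       (auto intro: continuous_on_subset)
  also have "\<dots> \<le> B * C" by (intro mult_left_mono kern_integral_le blk_less assms)
  finally show ?thesis .
qed

lemma continuous_on_Fop:
  assumes "\<xi> \<in> Cball t0 r"
  shows "continuous_on {t0..} (Fop \<alpha> \<rho> t0 blk lam h x \<xi>)"
proof -
  have "continuous_on {t0..} (\<lambda>t. mittag_leffler \<alpha> 1
      (lam (blk k) * complex_of_real (((t powr \<rho> - t0 powr \<rho>) / \<rho>) powr \<alpha>)))" for k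
    by (intro continuous_on_mittag_leffler continuous_on_mult_left continuous_on_of_real
        continuous_on_kern_arg_powr alpha_pos rho_pos t0_pos) simp
  moreover have "continuous_on {t0..} (\<lambda>t. integral {t0..t} (\<lambda>s. kern \<alpha> \<rho> (lam (blk k)) t s * h (\<xi> s) $ k))"
    for k
    by (rule continuous_on_integral_kern[OF alpha_pos rho_pos t0_pos kern_integrable[OF blk_less]
          continuous_on_component[OF Cball_h_continuous_on[OF assms]] Cball_h_le[OF assms]])
  ultimately have "continuous_on {t0..} (\<lambda>t. Fop \<alpha> \<rho> t0 blk lam h x \<xi> t $ k)" for k
    unfolding Fop_nth by (intro continuous_on_add continuous_on_mult_right)
  thus ?thesis by (rule continuous_on_vec_lambda[where f="\<lambda>k t. Fop _ _ _ _ _ _ _ _ t $ k",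
      unfolded vec_nth_inverse])
qed

theorem Fop_mem_Cball:
  assumes x: "cnorm x \<le> r * (1 - C * L) / ml_sup" and \<xi>: "\<xi> \<in> Cball t0 r"
  shows "Fop \<alpha> \<rho> t0 blk lam h x \<xi> \<in> Cball t0 r"
proof (rule mem_CballI[OF continuous_on_Fop[OF \<xi>] cnorm_leI])
  fix t k assume t: "t0 \<le> t"
  have "cmod (Fop \<alpha> \<rho> t0 blk lam h x \<xi> t $ k) \<le> ml_sup * cnorm x + L * r * C"
    unfolding Fop_nth
  proof (rule order_trans[OF norm_triangle_ineq add_mono])
    show "cmod (mittag_leffler \<alpha> 1 (lam (blk k) * complex_of_real (((t powr \<rho> - t0 powr \<rho>) / \<rho>) powr \<alpha>))
        * x $ k) \<le> ml_sup * cnorm x"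
      unfolding norm_mult
      by (intro mult_mono norm_mittag_leffler_le_ml_sup blk_less t nth_le_cnorm)
         (use ml_sup_ge_one in auto)
    have "0 \<le> r" by (rule order_trans[OF cnorm_nonneg Cball_le[OF \<xi> order_refl]])
    thus "cmod (integral {t0..t} (\<lambda>s. kern \<alpha> \<rho> (lam (blk k)) t s * h (\<xi> s) $ k)) \<le> L * r * C"
      by (intro norm_integral_kern_le[OF continuous_on_component[OF Cball_h_continuous_on[OF \<xi>]]
          Cball_h_le[OF \<xi>] _ t] mult_nonneg_nonneg L_nonneg)
  qed
  also have "\<dots> \<le> r" using x ml_sup_ge_one by (simp add: le_divide_eq algebra_simps)
  finally show "cmod (Fop \<alpha> \<rho> t0 blk lam h x \<xi> t $ k) \<le> r" .
qed

theorem sup_norm_Fop_diff_le: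
  assumes \<xi>: "\<xi> \<in> Cball t0 r" and \<xi>': "\<xi>' \<in> Cball t0 r"
  shows "sup_norm t0 (\<lambda>t. Fop \<alpha> \<rho> t0 blk lam h x \<xi> t - Fop \<alpha> \<rho> t0 blk lam h x \<xi>' t)
    \<le> C * L * sup_norm t0 (\<lambda>t. \<xi> t - \<xi>' t)"
proof (rule sup_norm_le, rule cnorm_leI)
  fix t k assume t: "t0 \<le> t"
  define D where "D = sup_norm t0 (\<lambda>t. \<xi> t - \<xi>' t)"
  have D: "cnorm (\<xi> s - \<xi>' s) \<le> D" if "t0 \<le> s" for s
    unfolding D_def using cnorm_le_sup_norm[OF Cball_diff_mem_Cinf[OF \<xi> \<xi>'] that] by simp
  define g where "g s = h (\<xi> s) $ k - h (\<xi>' s) $ k" for s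
  have g_cont: "continuous_on {t0..} g"
    unfolding g_def
    by (intro continuous_on_diff continuous_on_component Cball_h_continuous_on \<xi> \<xi>')
  have g_le: "norm (g s) \<le> L * D" if "t0 \<le> s" for s
  proof -
    have "norm (g s) \<le> cnorm (h (\<xi> s) - h (\<xi>' s))"
      using nth_le_cnorm[of "h (\<xi> s) - h (\<xi>' s)" k] by (simp add: g_def)
    also have "\<dots> \<le> L * cnorm (\<xi> s - \<xi>' s)"
      by (rule h_lipschitz[OF Cball_le[OF \<xi> that] Cball_le[OF \<xi>' that]])
    also have "\<dots> \<le> L * D" by (rule mult_left_mono[OF D[OF that] L_nonneg])
    finally show ?thesis .
  qed
  have int: "(\<lambda>s. kern \<alpha> \<rho> (lam (blk k)) t s * h (\<zeta> s) $ k) integrable_on {t0..t}"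
    if "\<zeta> \<in> Cball t0 r" for \<zeta>
    by (rule kern_mult_integrable[OF alpha_pos rho_pos t0_pos t kern_integrable[OF blk_less t]
          continuous_on_subset[OF continuous_on_component[OF Cball_h_continuous_on[OF that]]]
          Cball_h_le[OF that]]) auto
  have "(Fop \<alpha> \<rho> t0 blk lam h x \<xi> t - Fop \<alpha> \<rho> t0 blk lam h x \<xi>' t) $ k
      = integral {t0..t} (\<lambda>s. kern \<alpha> \<rho> (lam (blk k)) t s * h (\<xi> s) $ k)
        - integral {t0..t} (\<lambda>s. kern \<alpha> \<rho> (lam (blk k)) t s * h (\<xi>' s) $ k)"
    by (simp add: Fop_nth)
  also have "\<dots> = integral {t0..t} (\<lambda>s. kern \<alpha> \<rho> (lam (blk k)) t s * g s)"
    unfolding g_def right_diff_distrib by (rule integral_diff[OF int[OF \<xi>] int[OF \<xi>'], symmetric])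
  also have "cmod \<dots> \<le> L * D * C"
    using norm_integral_kern_le[OF g_cont g_le _ t, of k]
      mult_nonneg_nonneg[OF L_nonneg order_trans[OF cnorm_nonneg D[OF order_refl]]] by simp
  finally show "cmod ((Fop \<alpha> \<rho> t0 blk lam h x \<xi> t - Fop \<alpha> \<rho> t0 blk lam h x \<xi>' t) $ k) \<le> C * L * D"
    by (simp add: mult_ac)
qed

end
theorem lemma3p1:
  fixes \<alpha> \<rho> t0 C r :: real
    and A :: "real ^ 'd ^ 'd"
    and f :: "real ^ 'd \<Rightarrow> real ^ 'd"
    and T :: "complex ^ 'd ^ 'd"
    and n :: nat and ds :: "nat \<Rightarrow> nat" and lam :: "nat \<Rightarrow> complex" and eta :: "nat \<Rightarrow> bool"
    and blk pos :: "'d \<Rightarrow> nat"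
  assumes "0 < \<alpha>" "\<alpha> < 1" "0 < \<rho>" "0 < t0"
    and spec: "\<And>z v. v \<noteq> 0 \<Longrightarrow> cmat_of A *v v = z *s v \<Longrightarrow> \<alpha> * pi / 2 < \<bar>Arg z\<bar>"
    and f_loclip: "\<And>R. 0 < R \<Longrightarrow> bdd_above (lip_quot rnorm f R)"
    and f0: "f 0 = 0"
    and f_lim: "((\<lambda>R. lip_const rnorm f R) \<longlongrightarrow> 0) (at_right 0)"
    and blocks: "bij_betw (\<lambda>k. (blk k, pos k)) UNIV {(i, j). i < n \<and> j < ds i}"
    and ds_pos: "\<And>i. i < n \<Longrightarrow> 1 \<le> ds i"
    and T_inv: "invertible T"
    and jordan: "matrix_inv T ** cmat_of A ** T = jordan_mat blk pos lam eta"
    and C_pos: "0 < C"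
    and C_bound: "\<And>i a t. i < n \<Longrightarrow> 0 < a \<Longrightarrow> a \<le> t \<Longrightarrow>
         (\<lambda>s. cmod (kern \<alpha> \<rho> (lam i) t s)) integrable_on {a..t}
         \<and> integral {a..t} (\<lambda>s. cmod (kern \<alpha> \<rho> (lam i) t s)) \<le> C"
    and r_pos: "0 < r"
    and q_lt: "C * lip_const cnorm (hfun blk pos eta (1 / (2 * C)) T f) r < 1"
  shows "\<forall>x. cnorm x \<le>
            r * (1 - C * lip_const cnorm (hfun blk pos eta (1 / (2 * C)) T f) r)
              / Max ((\<lambda>i. SUP t\<in>{t0..}. cmod (mittag_leffler \<alpha> 1 (lam i
                   * complex_of_real (((t powr \<rho> - t0 powr \<rho>) / \<rho>) powr \<alpha>)))) ` {..<n})
         \<longrightarrow> (\<forall>\<xi>\<in>Cball t0 r.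
                Fop \<alpha> \<rho> t0 blk lam (hfun blk pos eta (1 / (2 * C)) T f) x \<xi> \<in> Cball t0 r)
           \<and> (\<forall>\<xi>\<in>Cball t0 r. \<forall>\<xi>'\<in>Cball t0 r.
                sup_norm t0 (\<lambda>t. Fop \<alpha> \<rho> t0 blk lam (hfun blk pos eta (1 / (2 * C)) T f) x \<xi> t
                                 - Fop \<alpha> \<rho> t0 blk lam (hfun blk pos eta (1 / (2 * C)) T f) x \<xi>' t)
                \<le> C * lip_const cnorm (hfun blk pos eta (1 / (2 * C)) T f) r
                    * sup_norm t0 (\<lambda>t. \<xi> t - \<xi>' t))"
proof -
  define h where "h = hfun blk pos eta (1 / (2 * C)) T f"
  define L where "L = lip_const cnorm h r"
  have bdd: "bdd_above (lip_quot cnorm h r)"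
    unfolding h_def by (rule bdd_above_lip_quot_hfun[OF f_loclip])
  have L_nonneg: "0 \<le> L" unfolding L_def by (rule lip_const_cnorm_nonneg[OF bdd r_pos])
  interpret Fop_contraction \<alpha> \<rho> t0 C L r n blk lam h
  proof
    show "blk k < n" for k using bij_betwE[OF blocks] by auto
    show "h 0 = 0" unfolding h_def by (rule hfun_zero[of f, OF f0])
    show "cnorm (h y - h z) \<le> L * cnorm (y - z)" if "cnorm y \<le> r" "cnorm z \<le> r" for y z
      unfolding L_def by (rule lip_const_le[OF cnorm_zero cnorm_pos bdd that])
  qed (use assms L_nonneg in auto)
  show ?thesis
    unfolding h_def[symmetric] L_def[symmetric] ml_sup_def[symmetric]
    using Fop_mem_Cball sup_norm_Fop_diff_le by blast
qed
end
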